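(* Let $0<q<1$, let $m,n$ be positive integers, let $s_1,\dots,s_m>0$ be real and let $b_1,\dots,b_m$ be complex numbers with $|b_k|>1$ for all $k$. Put $s=s_1+\cdots+s_m$. Then \[ n^m\,\lambda_{q^n}\begin{bmatrix}s_1,\dots,s_m\\ b_1^n,\dots,b_m^n\end{bmatrix} = [n]_q^{\,s}\sum_{\varepsilon_1^n=\cdots=\varepsilon_m^n=1} \lambda_q\begin{bmatrix}s_1,\dots,s_m\\ \varepsilon_1b_1,\dots,\varepsilon_mb_m\end{bmatrix}, \] where the sum is over all $n^m$ tuples $(\varepsilon_1,\dots,\varepsilon_m)$ of complex $n$-th roots of unity.
   Context: For $0<p<1$ and real $x$ let $[x]_p := (1-p^x)/(1-p)$. For real $s_1,\dots,s_m>0$ and complex $b_1,\dots,b_m$ with $|b_k|>1$, the multiple $p$-polylogarithm is \[ \lambda_p\begin{bmatrix}s_1,\dots,s_m\\ b_1,\dots,b_m\end{bmatrix} := \sum_{\nu_1,\dots,\nu_m\ge1}\prod_{k=1}^m b_k^{-\nu_k}\Big[\sum_{j=k}^m\nu_j\Big]_p^{-s_k}, \] the sum being over positive integers $\nu_1,\dots,\nu_m$. In the claim it is used with $p=q$ and with $p=q^n$. *)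

theory Defs
  imports "HOL-Analysis.Analysis"
begin

definition qint :: "real \<Rightarrow> real \<Rightarrow> real" where
  "qint p x = (1 - p powr x) / (1 - p)"

text \<open>Index set of the multiple sum: tuples (nu_0,...,nu_{m-1}) of positive integers,
  encoded as functions nat => nat that are zero outside {..<m}.\<close>
definition pos_tuples :: "nat \<Rightarrow> (nat \<Rightarrow> nat) set" where
  "pos_tuples m = {\<nu>. (\<forall>k<m. 1 \<le> \<nu> k) \<and> (\<forall>k\<ge>m. \<nu> k = 0)}"

text \<open>Multiple p-polylogarithm; s and b are indexed 0..m-1.\<close>
definition mplog :: "real \<Rightarrow> nat \<Rightarrow> (nat \<Rightarrow> real) \<Rightarrow> (nat \<Rightarrow> complex) \<Rightarrow> complex" where
  "mplog p m s b = infsum (\<lambda>\<nu>. \<Prod>k<m. b k powi (- int (\<nu> k)) *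
       complex_of_real (qint p (real (\<Sum>j\<in>{k..<m}. \<nu> j)) powr (- s k))) (pos_tuples m)"

end

theory Submission
  imports Defs "HOL-Library.Real_Mod"
begin

text \<open>Expand every lambda_q[s; eps b] as its series and sum over the roots of unity eps first.
  Orthogonality of the n-th roots of unity (the sum of eps^(-nu) over eps^n = 1 is n if n divides nu
  and 0 otherwise) keeps exactly the multi-indices nu = n nu' and weights them by n^m. For these,
  [n N]_q = [n]_q [N]_(q^n) turns the term of lambda_q[s; b] at n nu' into [n]_q^(-s) times the
  term of lambda_(q^n)[s; b^n] at nu'. Exchanging the finite sum with the series is legitimate
  because |b_k| > 1 makes every series absolutely convergent, by comparison with a product of
  geometric series.\<close>

lemma cis_fraction_eq_1_iff:
  assumes "n > 0"
  shows "cis (of_int a / real n * (2 * pi)) = 1 \<longleftrightarrow> int n dvd a"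
proof -
  have "cis (of_int a / real n * (2 * pi)) = 1 \<longleftrightarrow> (\<exists>t::int. of_int a / real n * (2 * pi) = of_int t * (2 * pi))"
    by (rule cis_eq_1_iff)
  also have "\<dots> \<longleftrightarrow> (\<exists>t::int. real_of_int a = real_of_int (t * int n))"
  proof (intro ex_cong1)
    fix t :: int
    show "of_int a / real n * (2 * pi) = of_int t * (2 * pi) \<longleftrightarrow> real_of_int a = real_of_int (t * int n)"
      using assms by (subst mult_cancel_right) (auto simp: field_simps)
  qed
  also have "\<dots> \<longleftrightarrow> int n dvd a"
    unfolding of_int_eq_iff by (auto simp: dvd_def mult.commute)
  finally show ?thesis .
qed

lemma sum_roots_unity_power_int:
  assumes "n > 0"
  shows "(\<Sum>z | z ^ n = 1. (z::complex) powi - int \<mu>) = (if n dvd \<mu> then of_nat n else 0)"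
proof -
  define \<omega> where "\<omega> = cis (of_int (- int \<mu>) / real n * (2 * pi))"
  have "(\<Sum>z | z ^ n = 1. (z::complex) powi - int \<mu>) = (\<Sum>k<n. cis (2 * pi * real k / real n) powi - int \<mu>)"
    using assms by (intro sum.reindex_bij_betw [symmetric] Complex.bij_betw_roots_unity)
  also have "\<dots> = (\<Sum>k<n. \<omega> ^ k)"
    by (intro sum.cong refl) (simp add: \<omega>_def cis_power_int Complex.DeMoivre, simp add: algebra_simps)
  finally have sum_eq: "(\<Sum>z | z ^ n = 1. (z::complex) powi - int \<mu>) = (\<Sum>k<n. \<omega> ^ k)" .
  have "\<omega> = 1 \<longleftrightarrow> n dvd \<mu>"
    unfolding \<omega>_def cis_fraction_eq_1_iff [OF assms] by simp
  moreover have "\<omega> ^ n = 1"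
    using assms cis_fraction_eq_1_iff [of 1 "- int \<mu>"]
    by (simp add: \<omega>_def Complex.DeMoivre)
  ultimately show ?thesis
    using sum_eq by (auto simp: geometric_sum)
qed

lemma norm_root_unity:
  assumes "z ^ n = 1" "n > 0"
  shows "norm (z::complex) = 1"
proof -
  have "norm z ^ n = 1" using assms by (simp flip: norm_power)
  then show ?thesis using assms power_eq_imp_eq_base [of "norm z" n 1] by simp
qed

lemma sum_PiE_roots_unity_prod_power_int:
  assumes "n > 0"
  shows "(\<Sum>\<epsilon>\<in>Pi\<^sub>E {..<m} (\<lambda>_. {z::complex. z ^ n = 1}). \<Prod>k<m. \<epsilon> k powi - int (\<mu> k))
       = (if \<forall>k<m. n dvd \<mu> k then of_nat n ^ m else 0)"
proof -
  have "(\<Sum>\<epsilon>\<in>Pi\<^sub>E {..<m} (\<lambda>_. {z::complex. z ^ n = 1}). \<Prod>k<m. \<epsilon> k powi - int (\<mu> k))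
      = (\<Prod>k<m. \<Sum>z | z ^ n = 1. z powi - int (\<mu> k))"
    using assms by (intro prod_sum_PiE [symmetric]) (auto intro: finite_roots_unity)
  also have "\<dots> = (\<Prod>k<m. if n dvd \<mu> k then of_nat n else 0)"
    using assms by (simp add: sum_roots_unity_power_int)
  also have "\<dots> = (if \<forall>k<m. n dvd \<mu> k then of_nat n ^ m else 0)"
    by (auto intro: prod_zero)
  finally show ?thesis .
qed

lemma qint_nonneg:
  assumes "0 < p" "p < 1" "0 \<le> x"
  shows "0 \<le> qint p x"
proof -
  have "p powr x \<le> p powr 0" using assms by (intro powr_mono') auto
  then show ?thesis using assms by (simp add: qint_def)
qed

lemma qint_ge_1:
  assumes "0 < p" "p < 1" "1 \<le> x"
  shows "1 \<le> qint p x"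
proof -
  have "p powr x \<le> p powr 1" using assms by (intro powr_mono') auto
  then show ?thesis using assms by (simp add: qint_def field_simps)
qed

lemma qint_mult:
  assumes "0 < p" "p < 1" "0 < a"
  shows "qint p (a * x) = qint p a * qint (p powr a) x"
proof -
  have "p powr a < p powr 0" using assms by (intro powr_less_mono') auto
  then have "p powr a \<noteq> 1" using assms by simp
  then show ?thesis by (simp add: qint_def powr_powr)
qed

lemma infsum_sum:
  fixes f :: "'i \<Rightarrow> 'a \<Rightarrow> 'b::{topological_comm_monoid_add, t2_space}"
  assumes "finite I" "\<And>i. i \<in> I \<Longrightarrow> f i summable_on A"
  shows "infsum (\<lambda>x. \<Sum>i\<in>I. f i x) A = (\<Sum>i\<in>I. infsum (f i) A)"
proof -
  have "((\<lambda>x. \<Sum>i\<in>I. f i x) has_sum (\<Sum>i\<in>I. infsum (f i) A)) A"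
    using assms
  proof (induction I rule: finite_induct)
    case empty
    then show ?case by simp
  next
    case (insert i I)
    then show ?case by (simp add: has_sum_add has_sum_infsum)
  qed
  then show ?thesis by (rule infsumI)
qed

lemma pos_tuples_eq_image_PiE:
  "pos_tuples m = (\<lambda>h k. if k < m then h k else 0) ` Pi\<^sub>E {..<m} (\<lambda>_. {1..})"
proof (intro equalityI subsetI)
  fix \<nu> assume "\<nu> \<in> pos_tuples m"
  then have "\<nu> = (\<lambda>k. if k < m then restrict \<nu> {..<m} k else 0)"
    and "restrict \<nu> {..<m} \<in> Pi\<^sub>E {..<m} (\<lambda>_. {1..})"
    by (auto simp: pos_tuples_def fun_eq_iff)
  then show "\<nu> \<in> (\<lambda>h k. if k < m then h k else 0) ` Pi\<^sub>E {..<m} (\<lambda>_. {1..})"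
    by (rule image_eqI)
next
  fix \<nu> :: "nat \<Rightarrow> nat" assume "\<nu> \<in> (\<lambda>h k. if k < m then h k else 0) ` Pi\<^sub>E {..<m} (\<lambda>_. {1..})"
  then obtain h where "h \<in> Pi\<^sub>E {..<m} (\<lambda>_. {1..})" and "\<nu> = (\<lambda>k. if k < m then h k else 0)"
    by (rule imageE)
  then show "\<nu> \<in> pos_tuples m"
    by (auto simp: pos_tuples_def PiE_iff)
qed

lemma inj_on_extend_zero_PiE:
  "inj_on (\<lambda>h k. if k < m then h k else 0) (Pi\<^sub>E {..<m} B)"
proof (rule inj_onI)
  fix g h assume g: "g \<in> Pi\<^sub>E {..<m} B" and h: "h \<in> Pi\<^sub>E {..<m} B"
    and eq: "(\<lambda>k. if k < m then g k else 0) = (\<lambda>k. if k < m then h k else 0)"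
  have "g k = h k" if "k \<in> {..<m}" for k
    using fun_cong [OF eq, of k] that by simp
  then show "g = h"
    using g h by (intro PiE_ext)
qed

lemma summable_on_prod_power_pos_tuples:
  fixes r :: "nat \<Rightarrow> real"
  assumes "\<And>k. k < m \<Longrightarrow> 0 \<le> r k" "\<And>k. k < m \<Longrightarrow> r k < 1"
  shows "(\<lambda>\<nu>. \<Prod>k<m. r k ^ \<nu> k) summable_on pos_tuples m"
proof -
  have "Infinite_Set_Sum.abs_summable_on (\<lambda>j. r k ^ j) {1..}" if "k < m" for k
  proof -
    have "(\<lambda>j. r k ^ j) summable_on {1..}"
      using has_sum_geometric_from_1 [of "r k"] assms that by (auto simp: summable_on_def)
    then show ?thesis
      using assms that by (simp flip: abs_summable_equivalent)
  qed
  then have "Infinite_Set_Sum.abs_summable_on (\<lambda>h. \<Prod>k<m. r k ^ h k) (Pi\<^sub>E {..<m} (\<lambda>_. {1..}))"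
    by (intro abs_summable_on_prod_PiE) auto
  then have "Infinite_Sum.abs_summable_on (\<lambda>h. \<Prod>k<m. r k ^ h k) (Pi\<^sub>E {..<m} (\<lambda>_. {1..}))"
    by (simp only: abs_summable_equivalent)
  then have "(\<lambda>h. \<Prod>k<m. r k ^ h k) summable_on Pi\<^sub>E {..<m} (\<lambda>_. {1..})"
    by (rule abs_summable_summable)
  moreover have "(\<lambda>\<nu>. \<Prod>k<m. r k ^ \<nu> k) \<circ> (\<lambda>h k. if k < m then h k else 0) = (\<lambda>h. \<Prod>k<m. r k ^ h k)"
    by (auto intro!: prod.cong)
  ultimately show ?thesis
    by (simp only: pos_tuples_eq_image_PiE summable_on_reindex [OF inj_on_extend_zero_PiE])
qed

definition mplog_term ::
    "real \<Rightarrow> nat \<Rightarrow> (nat \<Rightarrow> real) \<Rightarrow> (nat \<Rightarrow> complex) \<Rightarrow> (nat \<Rightarrow> nat) \<Rightarrow> complex"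
  where
  "mplog_term p m s b \<nu> = (\<Prod>k<m. b k powi - int (\<nu> k) *
       complex_of_real (qint p (real (\<Sum>j\<in>{k..<m}. \<nu> j)) powr - s k))"

lemma mplog_eq_infsum: "mplog p m s b = infsum (mplog_term p m s b) (pos_tuples m)"
  unfolding mplog_def mplog_term_def ..

lemma norm_mplog_term_le:
  assumes "0 < p" "p < 1" "\<And>k. k < m \<Longrightarrow> 0 \<le> s k" and \<nu>: "\<nu> \<in> pos_tuples m"
  shows "norm (mplog_term p m s b \<nu>) \<le> (\<Prod>k<m. inverse (norm (b k)) ^ \<nu> k)"
  unfolding mplog_term_def prod_norm [symmetric]
proof (intro prod_mono conjI)
  fix k assume k: "k \<in> {..<m}"
  have "\<nu> k \<le> (\<Sum>j\<in>{k..<m}. \<nu> j)" "1 \<le> \<nu> k"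
    using k \<nu> by (auto simp: pos_tuples_def intro: member_le_sum)
  then have "1 \<le> qint p (real (\<Sum>j\<in>{k..<m}. \<nu> j))"
    using assms by (intro qint_ge_1) (simp_all del: of_nat_sum)
  then have "qint p (real (\<Sum>j\<in>{k..<m}. \<nu> j)) powr - s k \<le> 1"
    using assms k by (auto simp: powr_minus inverse_le_1_iff intro: ge_one_powr_ge_zero)
  moreover have "norm (b k powi - int (\<nu> k)) = inverse (norm (b k)) ^ \<nu> k"
    by (simp add: norm_power_int power_int_minus norm_inverse norm_power power_inverse)
  ultimately show "norm (b k powi - int (\<nu> k) * complex_of_real (qint p (real (\<Sum>j\<in>{k..<m}. \<nu> j)) powr - s k))
      \<le> inverse (norm (b k)) ^ \<nu> k"
    by (simp add: norm_mult mult_left_le)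
qed simp

lemma summable_on_mplog_term:
  assumes "0 < p" "p < 1" "\<And>k. k < m \<Longrightarrow> 0 \<le> s k" "\<And>k. k < m \<Longrightarrow> 1 < norm (b k)"
  shows "mplog_term p m s b summable_on pos_tuples m"
proof -
  have "(\<lambda>\<nu>. \<Prod>k<m. inverse (norm (b k)) ^ \<nu> k) summable_on pos_tuples m"
    using assms by (intro summable_on_prod_power_pos_tuples) (auto simp: inverse_less_1_iff)
  moreover have "norm (mplog_term p m s b \<nu>) \<le> (\<Prod>k<m. inverse (norm (b k)) ^ \<nu> k)"
    if "\<nu> \<in> pos_tuples m" for \<nu>
    using assms(1-3) that by (rule norm_mplog_term_le)
  ultimately have "(\<lambda>\<nu>. norm (mplog_term p m s b \<nu>)) summable_on pos_tuples m"
    by (rule Infinite_Sum.abs_summable_on_comparison_test')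
  then show ?thesis by (rule abs_summable_summable)
qed

lemma mplog_term_twist:
  "mplog_term p m s (\<lambda>k. \<epsilon> k * b k) \<mu> = (\<Prod>k<m. \<epsilon> k powi - int (\<mu> k)) * mplog_term p m s b \<mu>"
  unfolding mplog_term_def by (simp add: power_int_mult_distrib prod.distrib mult.assoc)

lemma mplog_term_mult_indices:
  assumes "0 < q" "q < 1" "0 < n"
  shows "mplog_term q m s b (\<lambda>k. n * \<nu> k)
       = complex_of_real (qint q (real n) powr - (\<Sum>k<m. s k)) * mplog_term (q ^ n) m s (\<lambda>k. b k ^ n) \<nu>"
proof -
  have "qint q (real (\<Sum>j\<in>{k..<m}. n * \<nu> j)) powr - s k
      = qint q (real n) powr - s k * qint (q ^ n) (real (\<Sum>j\<in>{k..<m}. \<nu> j)) powr - s k" for k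
  proof -
    have "qint q (real (\<Sum>j\<in>{k..<m}. n * \<nu> j)) = qint q (real n) * qint (q ^ n) (real (\<Sum>j\<in>{k..<m}. \<nu> j))"
      using assms by (simp add: qint_mult powr_realpow flip: sum_distrib_left)
    moreover have "0 \<le> qint (q ^ n) (real (\<Sum>j\<in>{k..<m}. \<nu> j))"
      using assms by (intro qint_nonneg) (auto simp: power_less_one_iff simp del: of_nat_sum)
    ultimately show ?thesis
      using assms qint_nonneg [of q "real n"] by (simp add: powr_mult)
  qed
  moreover have "b k powi - int (n * \<nu> k) = (b k ^ n) powi - int (\<nu> k)" for k
    by (simp add: power_int_power)
  moreover have "(\<Prod>k<m. qint q (real n) powr - s k) = qint q (real n) powr - (\<Sum>k<m. s k)"
    using assms qint_ge_1 [of q "real n"] by (simp add: powr_sum [symmetric] sum_negf)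
  ultimately show ?thesis
    unfolding mplog_term_def by (simp add: prod.distrib mult_ac flip: of_real_prod)
qed

lemma multiples_in_pos_tuples:
  assumes "n > 0"
  shows "{\<mu> \<in> pos_tuples m. \<forall>k<m. n dvd \<mu> k} = (\<lambda>\<nu> k. n * \<nu> k) ` pos_tuples m"
proof (intro equalityI subsetI)
  fix \<mu> assume \<mu>: "\<mu> \<in> {\<mu> \<in> pos_tuples m. \<forall>k<m. n dvd \<mu> k}"
  have "\<mu> = (\<lambda>k. n * (\<mu> k div n))"
  proof
    fix k show "\<mu> k = n * (\<mu> k div n)"
      using \<mu> by (cases "k < m") (auto simp: pos_tuples_def)
  qed
  moreover have "(\<lambda>k. \<mu> k div n) \<in> pos_tuples m"
    using \<mu> assms by (auto simp: pos_tuples_def Suc_le_eq div_greater_zero_iff intro: dvd_imp_le)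
  ultimately show "\<mu> \<in> (\<lambda>\<nu> k. n * \<nu> k) ` pos_tuples m" by (rule image_eqI)
next
  fix \<mu> assume "\<mu> \<in> (\<lambda>\<nu> k. n * \<nu> k) ` pos_tuples m"
  then obtain \<nu> where "\<nu> \<in> pos_tuples m" and "\<mu> = (\<lambda>k. n * \<nu> k)"
    by (rule imageE)
  then show "\<mu> \<in> {\<mu> \<in> pos_tuples m. \<forall>k<m. n dvd \<mu> k}"
    using assms by (auto simp: pos_tuples_def)
qed

theorem theorem6p1:
  fixes q :: real and m n :: nat and s :: "nat \<Rightarrow> real" and b :: "nat \<Rightarrow> complex"
  assumes "0 < q" "q < 1" "0 < m" "0 < n"
    and "\<And>k. k < m \<Longrightarrow> 0 < s k"
    and "\<And>k. k < m \<Longrightarrow> 1 < norm (b k)"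
  shows "of_nat n ^ m * mplog (q ^ n) m s (\<lambda>k. b k ^ n)
       = complex_of_real (qint q (real n) powr (\<Sum>k<m. s k)) *
         (\<Sum>\<epsilon>\<in>Pi\<^sub>E {..<m} (\<lambda>_. {z::complex. z ^ n = 1}).
            mplog q m s (\<lambda>k. \<epsilon> k * b k))"
proof -
  let ?E = "Pi\<^sub>E {..<m} (\<lambda>_. {z::complex. z ^ n = 1})"
  let ?multiple = "\<lambda>\<mu>. \<forall>k<m. n dvd \<mu> k"
  let ?c = "qint q (real n) powr (\<Sum>k<m. s k)"
  have "mplog_term q m s (\<lambda>k. \<epsilon> k * b k) summable_on pos_tuples m" if "\<epsilon> \<in> ?E" for \<epsilon>
  proof -
    have "norm (\<epsilon> k) = 1" if "k < m" for k
      using \<open>\<epsilon> \<in> ?E\<close> \<open>n > 0\<close> that by (auto intro: norm_root_unity)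
    then show ?thesis
      using assms by (intro summable_on_mplog_term) (auto simp: norm_mult less_imp_le)
  qed
  then have "(\<Sum>\<epsilon>\<in>?E. mplog q m s (\<lambda>k. \<epsilon> k * b k))
      = infsum (\<lambda>\<mu>. \<Sum>\<epsilon>\<in>?E. mplog_term q m s (\<lambda>k. \<epsilon> k * b k) \<mu>) (pos_tuples m)"
    using assms by (simp add: mplog_eq_infsum infsum_sum finite_PiE finite_roots_unity)
  also have "\<dots> = infsum (\<lambda>\<mu>. (if ?multiple \<mu> then of_nat n ^ m else 0) * mplog_term q m s b \<mu>) (pos_tuples m)"
    using assms by (simp add: mplog_term_twist sum_PiE_roots_unity_prod_power_int flip: sum_distrib_right)
  also have "\<dots> = of_nat n ^ m * infsum (mplog_term q m s b) {\<mu> \<in> pos_tuples m. ?multiple \<mu>}"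
    by (subst infsum_cmult_right' [symmetric]) (intro infsum_cong_neutral; auto)
  also have "infsum (mplog_term q m s b) {\<mu> \<in> pos_tuples m. ?multiple \<mu>}
      = infsum (\<lambda>\<nu>. mplog_term q m s b (\<lambda>k. n * \<nu> k)) (pos_tuples m)"
    using assms by (simp add: multiples_in_pos_tuples infsum_reindex inj_on_def fun_eq_iff o_def)
  also have "\<dots> = complex_of_real (inverse ?c) * mplog (q ^ n) m s (\<lambda>k. b k ^ n)"
    using assms by (simp add: mplog_term_mult_indices mplog_eq_infsum infsum_cmult_right' powr_minus)
  finally show ?thesis
    using assms qint_ge_1 [of q "real n"] by (simp add: field_simps)
qed

end
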